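(* For every $n\ge0$, $$P_n=\sum_{m=0}^{\lfloor n/2\rfloor}\frac{q^{-m(2m+1-2\delta_{n\equiv t})}}{(1-q^{-4})(1-q^{-8})\cdots(1-q^{-4m})}\Delta_{n-2m},\qquad \Delta_n=\sum_{m=0}^{\lfloor n/2\rfloor}(-1)^m\frac{q^{-m(2\delta_{n\not\equiv t}+1)}}{(1-q^{-4})(1-q^{-8})\cdots(1-q^{-4m})}P_{n-2m}.$$
   Context: Fix $t\in\{0,1\}$. Let $\mathbf U^\imath_t=\mathbb Q(q)[B]$ be the polynomial algebra in $B$ over $\mathbb Q(q)$, $[n]=(q^n-q^{-n})/(q-q^{-1})$, $[n]!=[1]\cdots[n]$; $\delta_{n\equiv t}$ is $1$ if $n\equiv t\pmod2$ and $0$ otherwise, and $\delta_{n\not\equiv t}=1-\delta_{n\equiv t}$. The PBW basis $\Delta_n$ is defined by $\Delta_0=1$, $B\Delta_n=[n+1]\Delta_{n+1}+\frac{q^{n-1}}{1-q^{-2}}\Delta_{n-1}$ ($\Delta_{-1}=0$). The $\imath$-canonical basis is $P_n=\frac{B^{\sigma_t(n)}}{[n]!}\prod_{0\le k\le n-1,\ k\equiv t\ (2)}(B^2-[k]^2)$, where $\sigma_t(n)=0$ for $n$ even, $-1$ for $n$ odd and $t=0$, $1$ for $n$ odd and $t=1$ (when $\sigma_t(n)=-1$ the product contains the factor $B^2$, so $P_n$ is a polynomial). *)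

theory Defs
  imports "HOL-Computational_Algebra.Polynomial" "HOL-Computational_Algebra.Fraction_Field"
begin

type_synonym Qq = "rat poly fract"

definition qv :: Qq where "qv = Fract [:0, 1:] 1"

definition qint :: "nat \<Rightarrow> Qq" where
  "qint n = (qv ^ n - qv powi (- int n)) / (qv - inverse qv)"

definition qfact :: "nat \<Rightarrow> Qq" where
  "qfact n = (\<Prod>k\<in>{1..n}. qint k)"

text \<open>The generator B of U^i_t = Q(q)[B].\<close>
definition BB :: "Qq poly" where "BB = [:0, 1:]"

text \<open>PBW basis: Delta_0 = 1, Delta_{-1} = 0,
  B Delta_n = [n+1] Delta_{n+1} + q^{n-1}/(1-q^{-2}) Delta_{n-1}.\<close>
fun Delta :: "nat \<Rightarrow> Qq poly" where
  "Delta 0 = 1"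
| "Delta (Suc 0) = smult (inverse (qint 1)) (BB * Delta 0)"
| "Delta (Suc (Suc n)) = smult (inverse (qint (n + 2)))
      (BB * Delta (Suc n) - smult (qv ^ n / (1 - qv powi (-2))) (Delta n))"

definition Pprod :: "nat \<Rightarrow> nat \<Rightarrow> Qq poly" where
  "Pprod t n = (\<Prod>k\<in>{k. k < n \<and> k mod 2 = t}. BB ^ 2 - [:qint k ^ 2:])"

text \<open>i-canonical basis P_n = B^{sigma_t(n)}/[n]! * product; for sigma = -1 the product
  contains the factor B^2 (k = 0), and B^{-1} * product is the exact quotient by B.\<close>
definition Pcan :: "nat \<Rightarrow> nat \<Rightarrow> Qq poly" where
  "Pcan t n = smult (inverse (qfact n))
     (if even n then Pprod t n
      else if t = 0 then Pprod t n div BB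
      else BB * Pprod t n)"

definition qpoch4 :: "nat \<Rightarrow> Qq" where
  "qpoch4 m = (\<Prod>j\<in>{1..m}. 1 - qv powi (- 4 * int j))"

definition delta_eq :: "nat \<Rightarrow> nat \<Rightarrow> int" where
  "delta_eq t n = (if n mod 2 = t mod 2 then 1 else 0)"

end

theory Submission
  imports Defs
begin

(* Both families satisfy three-term recurrences under multiplication by B:
     B Delta_n = [n+1] Delta_(n+1) + q^n / (q - q^-1) Delta_(n-1)       (the definition of Delta),
     B P_n = [n+1] P_(n+1) + delta_(n == t mod 2) [n] P_(n-1)          (from the product formula).
   Applying B to a sum  sum_m c_m f_(n-2m)  over one family and collecting terms of equal index shows
   that the right-hand side of each expansion satisfies the recurrence of its left-hand side, provided
   consecutive coefficients obey a q-identity; after dividing out the common factors this is an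
   identity of Laurent polynomials in q, q^n and q^m.  Both sides agree at n = -1 and n = 0, and the
   leading coefficient [n+1] never vanishes, so they agree for all n. *)

lemma qv_nonzero [simp]: "qv \<noteq> 0"
  by (simp add: qv_def eq_fract Zero_fract_def)

lemma qv_power_neq_1:
  assumes "k > 0"
  shows "qv ^ k \<noteq> 1"
proof
  assume "qv ^ k = 1"
  moreover have "qv ^ k = Fract ([:0, 1:] ^ k) 1"
    by (induction k) (simp_all add: qv_def One_fract_def)
  ultimately have "([:0, 1:] ^ k :: rat poly) = 1"
    by (simp add: One_fract_def eq_fract)
  then have "degree ([:0, 1:] ^ k :: rat poly) = 0"
    by simp
  with assms show False
    by (simp add: degree_power_eq)
qed

lemma qv_powi_neq_1:
  assumes "k \<noteq> 0"
  shows "qv powi k \<noteq> 1"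
proof (cases "k > 0")
  case True
  then show ?thesis
    using qv_power_neq_1[of "nat k"] by (simp add: power_int_def)
next
  case False
  then show ?thesis
    using qv_power_neq_1[of "nat (- k)"] assms by (simp add: power_int_def power_inverse)
qed

lemma qv_powi_eq_iff: "qv powi a = qv powi b \<longleftrightarrow> a = b"
proof
  assume "qv powi a = qv powi b"
  then have "qv powi (a - b) = 1"
    by (simp add: power_int_diff)
  then show "a = b"
    using qv_powi_neq_1[of "a - b"] by auto
qed simp

definition qint_int :: "int \<Rightarrow> Qq" where
  "qint_int k = (qv powi k - qv powi (- k)) / (qv - inverse qv)"

lemma qv_minus_inverse_nonzero: "qv - inverse qv \<noteq> 0"
  using qv_powi_eq_iff[of 1 "-1"] by (simp add: power_int_minus)

lemma qint_int_of_nat [simp]: "qint_int (int n) = qint n"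
  by (simp add: qint_int_def qint_def)

lemma qint_int_nonzero: "k \<noteq> 0 \<Longrightarrow> qint_int k \<noteq> 0"
  using qv_powi_eq_iff[of k "- k"] qv_minus_inverse_nonzero by (simp add: qint_int_def)

lemma qint_0 [simp]: "qint 0 = 0"
  by (simp add: qint_def)

lemma qint_nonzero: "n > 0 \<Longrightarrow> qint n \<noteq> 0"
  using qint_int_nonzero[of "int n"] by simp

lemma qfact_0 [simp]: "qfact 0 = 1"
  by (simp add: qfact_def)

lemma qfact_Suc: "qfact (Suc n) = qfact n * qint (Suc n)"
  by (simp add: qfact_def)

lemma qfact_nonzero: "qfact n \<noteq> 0"
  by (induction n) (simp_all add: qfact_Suc qint_nonzero)

section \<open>The three-term recurrences\<close>

(* The convention Delta_(-1) = P_(-1) = 0 makes the recurrences hold at every integer index. *)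
definition zero_ext :: "(nat \<Rightarrow> 'a::zero) \<Rightarrow> int \<Rightarrow> 'a" where
  "zero_ext f k = (if k < 0 then 0 else f (nat k))"

lemma zero_ext_of_nat [simp]: "zero_ext f (int n) = f n"
  by (simp add: zero_ext_def)

lemma zero_ext_neg [simp]: "k < 0 \<Longrightarrow> zero_ext f k = 0"
  by (simp add: zero_ext_def)

(* q^k / (q - q^-1) = q^(k-1) / (1 - q^-2), the coefficient of Delta_(k-1) in the definition of Delta. *)
definition Delta_lower :: "int \<Rightarrow> Qq" where
  "Delta_lower k = qv powi k / (qv - inverse qv)"

lemma zero_ext_Delta_rec:
  "BB * zero_ext Delta k
     = smult (qint_int (k + 1)) (zero_ext Delta (k + 1)) + smult (Delta_lower k) (zero_ext Delta (k - 1))"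
proof -
  consider "k < -1" | "k = -1" | "k = 0" | "k \<ge> 1"
    by linarith
  then show ?thesis
  proof cases
    case 1
    then show ?thesis
      by simp
  next
    case 2
    then show ?thesis
      by (simp add: qint_int_def)
  next
    case 3
    have "qint 1 \<noteq> 0"
      by (simp add: qint_nonzero)
    with 3 show ?thesis
      using qint_int_of_nat[of 1] by (simp add: zero_ext_def)
  next
    case 4
    define n where "n = nat (k - 1)"
    have k: "k = int n + 1"
      using 4 by (simp add: n_def)
    have "Delta_lower k = qv ^ n / (1 - qv powi (-2))"
      using k qv_minus_inverse_nonzero
      by (simp add: Delta_lower_def power_int_add power_int_minus field_simps power2_eq_square)
    moreover have "qint (n + 2) \<noteq> 0"
      by (simp add: qint_nonzero)
    moreover have "zero_ext Delta k = Delta (Suc n)" "zero_ext Delta (k + 1) = Delta (Suc (Suc n))"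
      "zero_ext Delta (k - 1) = Delta n" "qint_int (k + 1) = qint (n + 2)"
      using k by (simp_all add: zero_ext_def nat_add_distrib add.commute flip: qint_int_of_nat)
    ultimately show ?thesis
      by (simp add: numeral_2_eq_2)
  qed
qed

lemma Pprod_0 [simp]: "Pprod t 0 = 1"
  by (simp add: Pprod_def)

lemma Pprod_Suc:
  "Pprod t (Suc n) = (if n mod 2 = t then Pprod t n * (BB\<^sup>2 - [:qint n ^ 2:]) else Pprod t n)"
proof -
  have fin: "finite {k. k < n \<and> k mod 2 = t}"
    by simp
  have "{k. k < Suc n \<and> k mod 2 = t}
      = (if n mod 2 = t then insert n else id) {k. k < n \<and> k mod 2 = t}"
    by (auto simp: less_Suc_eq)
  then show ?thesis
    using fin by (simp add: Pprod_def mult.commute)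
qed

lemma BB_dvd_Pprod_0:
  assumes "n > 0"
  shows "BB dvd Pprod 0 n"
proof -
  have "BB\<^sup>2 - [:qint 0 ^ 2:] dvd Pprod 0 n"
    unfolding Pprod_def using assms by (intro dvd_prodI) auto
  then show ?thesis
    by (simp add: power2_eq_square dvd_mult_left)
qed

lemma BB_nonzero [simp]: "BB \<noteq> 0"
  by (simp add: BB_def)

lemma delta_eq_parity: "delta_eq t n = (if even n \<longleftrightarrow> even t then 1 else 0)"
  by (cases "even n"; cases "even t") (simp_all add: delta_eq_def even_iff_mod_2_eq_zero odd_iff_mod_2_eq_one)

definition Pnum :: "nat \<Rightarrow> nat \<Rightarrow> Qq poly" where
  "Pnum t n = (if even n then Pprod t n else if t = 0 then Pprod t n div BB else BB * Pprod t n)"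

lemma Pcan_eq_Pnum: "Pcan t n = smult (inverse (qfact n)) (Pnum t n)"
  by (simp add: Pcan_def Pnum_def)

lemma Pnum_rec:
  assumes "t \<in> {0, 1}"
  shows "BB * Pnum t n = Pnum t (Suc n) + smult (of_int (delta_eq t n) * qint n ^ 2) (Pnum t (n - 1))"
proof -
  let ?c = "qint n ^ 2"
  from assms consider "t = 0" "even n" | "t = 0" "odd n" | "t = 1" "even n" | "t = 1" "odd n"
    by auto
  then show ?thesis
  proof cases
    case 1
    show ?thesis
    proof (cases "n = 0")
      case True
      with 1 show ?thesis
        by (simp add: Pnum_def Pprod_Suc power2_eq_square)
    next
      case False
      with 1 obtain m where m: "n = Suc m" "odd m"
        by (cases n) auto
      obtain R where R: "Pprod 0 m = BB * R"
        using BB_dvd_Pprod_0[of m] m by auto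
      have "Pnum 0 n = BB * R" "Pnum 0 (Suc n) = R * (BB\<^sup>2 - [:?c:])" "Pnum 0 (n - 1) = R"
        using m 1 R by (simp_all add: Pnum_def Pprod_Suc mult.assoc flip: even_iff_mod_2_eq_zero)
      with 1 show ?thesis
        by (simp add: delta_eq_parity algebra_simps power2_eq_square)
    qed
  next
    case 2
    then have "BB * Pnum 0 n = Pnum 0 (Suc n)"
      using BB_dvd_Pprod_0[of n] by (auto simp: Pnum_def Pprod_Suc)
    with 2 show ?thesis
      by (simp add: delta_eq_parity)
  next
    case 3
    then show ?thesis
      by (simp add: Pnum_def Pprod_Suc delta_eq_parity)
  next
    case 4
    then obtain m where m: "n = Suc m" "even m"
      by (cases n) auto
    have "Pnum 1 n = BB * Pprod 1 m" "Pnum 1 (Suc n) = Pprod 1 m * (BB\<^sup>2 - [:?c:])"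
      "Pnum 1 (n - 1) = Pprod 1 m"
      using m by (simp_all add: Pnum_def Pprod_Suc flip: even_iff_mod_2_eq_zero)
    with 4 show ?thesis
      by (simp add: delta_eq_parity algebra_simps power2_eq_square)
  qed
qed

lemma Pcan_rec:
  assumes "t \<in> {0, 1}"
  shows "BB * Pcan t n
     = smult (qint (Suc n)) (Pcan t (Suc n)) + smult (of_int (delta_eq t n) * qint n) (Pcan t (n - 1))"
proof -
  let ?d = "of_int (delta_eq t n) :: Qq"
  have up: "qint (Suc n) * inverse (qfact (Suc n)) = inverse (qfact n)"
    using qfact_nonzero[of n] qint_nonzero[of "Suc n"] by (simp add: qfact_Suc field_simps)
  have down: "?d * qint n * inverse (qfact (n - 1)) = inverse (qfact n) * (?d * qint n ^ 2)"
  proof (cases n)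
    case (Suc m)
    then show ?thesis
      using qfact_nonzero[of m] qint_nonzero[of n] by (simp add: qfact_Suc field_simps power2_eq_square)
  qed simp
  have "BB * Pcan t n = smult (inverse (qfact n)) (Pnum t (Suc n) + smult (?d * qint n ^ 2) (Pnum t (n - 1)))"
    by (simp add: Pcan_eq_Pnum Pnum_rec[OF assms])
  also have "\<dots> = smult (qint (Suc n)) (Pcan t (Suc n)) + smult (?d * qint n) (Pcan t (n - 1))"
    unfolding Pcan_eq_Pnum smult_smult up down by (simp add: smult_add_right)
  finally show ?thesis .
qed

definition delta_eq_int :: "nat \<Rightarrow> int \<Rightarrow> int" where
  "delta_eq_int t k = (if even k \<longleftrightarrow> even t then 1 else 0)"

lemma delta_eq_int_of_nat [simp]: "delta_eq_int t (int n) = delta_eq t n"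
  by (simp add: delta_eq_int_def delta_eq_parity)

lemma delta_eq_int_flip:
  "delta_eq_int t (k + 1) = 1 - delta_eq_int t k" "delta_eq_int t (k - 1) = 1 - delta_eq_int t k"
  by (simp_all add: delta_eq_int_def)

lemma delta_eq_int_shift2: "delta_eq_int t (k - 2 * int j) = delta_eq_int t k"
  by (simp add: delta_eq_int_def)

lemma delta_eq_int_0_or_1: "delta_eq_int t k = 0 \<or> delta_eq_int t k = 1"
  by (simp add: delta_eq_int_def)

definition Pcan_lower :: "nat \<Rightarrow> int \<Rightarrow> Qq" where
  "Pcan_lower t k = of_int (delta_eq_int t k) * qint_int k"

lemma Pcan_lower_of_nat [simp]: "Pcan_lower t (int n) = of_int (delta_eq t n) * qint n"
  by (simp add: Pcan_lower_def)

lemma zero_ext_Pcan_rec: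
  assumes "t \<in> {0, 1}"
  shows "BB * zero_ext (Pcan t) k
     = smult (qint_int (k + 1)) (zero_ext (Pcan t) (k + 1))
       + smult (Pcan_lower t k) (zero_ext (Pcan t) (k - 1))"
proof (cases "k < 0")
  case True
  then show ?thesis
    by (cases "k = -1") (simp_all add: qint_int_def)
next
  case False
  then obtain n where k: "k = int n"
    using nonneg_int_cases by (metis not_less)
  have "smult (Pcan_lower t (int n)) (zero_ext (Pcan t) (int n - 1))
      = smult (of_int (delta_eq t n) * qint n) (Pcan t (n - 1))"
  proof (cases "n = 0")
    case False
    then have "int n - 1 = int (n - 1)"
      by simp
    then show ?thesis
      by (simp only: Pcan_lower_of_nat zero_ext_of_nat)
  qed simp
  moreover have "int n + 1 = int (Suc n)"
    by simp
  ultimately show ?thesis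
    using Pcan_rec[OF assms, of n] k by (simp only: zero_ext_of_nat qint_int_of_nat)
qed

section \<open>Sums along a three-term recurrence\<close>

lemma smult_sum_right: "smult c (\<Sum>i\<in>A. f i) = (\<Sum>i\<in>A. smult c (f i))"
  by (induction A rule: infinite_finite_induct) (simp_all add: smult_add_right)

(* Terms with N - 2m < 0 are included; they vanish for sequences that are zero at negative indices. *)
definition shift2_sum :: "(nat \<Rightarrow> 'a::comm_ring_1) \<Rightarrow> (int \<Rightarrow> 'a poly) \<Rightarrow> int \<Rightarrow> 'a poly" where
  "shift2_sum c f N = (\<Sum>m<nat (N + 1). smult (c m) (f (N - 2 * int m)))"

lemma shift2_sum_rec:
  fixes x :: "'a::comm_ring_1 poly" and N :: nat
  assumes f_neg: "\<And>k. k < 0 \<Longrightarrow> f k = 0"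
    and f_rec: "\<And>k. x * f k = smult (u k) (f (k + 1)) + smult (v k) (f (k - 1))"
    and coeff_0: "a 0 * u (int N) = lam * b 0"
    and coeff_Suc: "\<And>j. a (Suc j) * u (int N - 2 * int j - 2) + a j * v (int N - 2 * int j)
                          = lam * b (Suc j) + mu * b j"
  shows "x * shift2_sum a f (int N)
     = smult lam (shift2_sum b f (int N + 1)) + smult mu (shift2_sum b f (int N - 1))"
proof -
  define g where "g m = f (int N + 1 - 2 * int m)" for m
  have g_last: "g (Suc N) = 0"
    by (simp add: g_def f_neg)
  have g_up: "f (int N - 2 * int m + 1) = g m" and g_down: "f (int N - 2 * int m - 1) = g (Suc m)" for m
    by (simp_all add: g_def algebra_simps)
  have bounds: "nat (int N + 1) = Suc N" "nat (int N + 1 + 1) = Suc (Suc N)" "nat (int N - 1 + 1) = N"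
    by simp_all
  have upper: "shift2_sum b f (int N + 1) = smult (b 0) (g 0) + (\<Sum>m<N. smult (b (Suc m)) (g (Suc m)))"
    unfolding shift2_sum_def bounds g_def[symmetric] sum.lessThan_Suc_shift[of _ "Suc N"]
    using g_last by simp
  have lower: "shift2_sum b f (int N - 1) = (\<Sum>m<N. smult (b m) (g (Suc m)))"
    by (simp add: shift2_sum_def bounds g_def algebra_simps)
  have "x * shift2_sum a f (int N)
      = (\<Sum>m<Suc N. smult (a m * u (int N - 2 * int m)) (g m))
        + (\<Sum>m<Suc N. smult (a m * v (int N - 2 * int m)) (g (Suc m)))"
    by (simp only: shift2_sum_def bounds sum_distrib_left mult_smult_right f_rec g_up g_down
        smult_add_right sum.distrib smult_smult)
  also have "\<dots> = smult (a 0 * u (int N)) (g 0)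
        + (\<Sum>m<N. smult (a (Suc m) * u (int N - 2 * int m - 2) + a m * v (int N - 2 * int m)) (g (Suc m)))"
    unfolding sum.lessThan_Suc_shift[of "\<lambda>m. smult (a m * u (int N - 2 * int m)) (g m)"]
    using g_last by (simp add: smult_add_left sum.distrib algebra_simps)
  also have "\<dots> = smult (lam * b 0) (g 0) + (\<Sum>m<N. smult (lam * b (Suc m) + mu * b m) (g (Suc m)))"
    by (simp add: coeff_0 coeff_Suc)
  also have "\<dots> = smult lam (shift2_sum b f (int N + 1)) + smult mu (shift2_sum b f (int N - 1))"
    by (simp add: upper lower smult_add_right smult_add_left smult_sum_right sum.distrib)
  finally show ?thesis .
qed

lemma three_term_rec_unique:
  fixes f g :: "int \<Rightarrow> 'a::idom poly"
  assumes init: "f (-1) = g (-1)" "f 0 = g 0"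
    and rec_f: "\<And>n. x * f (int n) = smult (lam n) (f (int n + 1)) + smult (mu n) (f (int n - 1))"
    and rec_g: "\<And>n. x * g (int n) = smult (lam n) (g (int n + 1)) + smult (mu n) (g (int n - 1))"
    and lam: "\<And>n. lam n \<noteq> 0"
  shows "f (int n) = g (int n)"
proof -
  have "f (int n - 1) = g (int n - 1) \<and> f (int n) = g (int n)"
  proof (induction n)
    case 0
    show ?case
      using init by simp
  next
    case (Suc n)
    then have "smult (lam n) (f (int n + 1)) = smult (lam n) (g (int n + 1))"
      using rec_f[of n] rec_g[of n] by (metis add_diff_cancel_right')
    then have "f (int n + 1) = g (int n + 1)"
      using lam smult_cancel by blast
    with Suc show ?case
      by (simp add: add.commute)
  qed
  then show ?thesis
    by simp
qed

lemma shift2_sum_zero_ext: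
  "shift2_sum c (zero_ext f) (int n) = (\<Sum>m\<in>{0..n div 2}. smult (c m) (f (n - 2 * m)))"
proof -
  have "shift2_sum c (zero_ext f) (int n)
      = (\<Sum>m\<in>{0..n div 2}. smult (c m) (zero_ext f (int n - 2 * int m)))"
    unfolding shift2_sum_def by (rule sum.mono_neutral_right) auto
  also have "\<dots> = (\<Sum>m\<in>{0..n div 2}. smult (c m) (f (n - 2 * m)))"
    by (rule sum.cong) (auto simp: zero_ext_def nat_diff_distrib nat_mult_distrib)
  finally show ?thesis .
qed

section \<open>The expansion coefficients\<close>

(* The parameter e stands for delta_eq t n. *)
definition Pcan_coeff :: "int \<Rightarrow> nat \<Rightarrow> Qq" where
  "Pcan_coeff e m = qv powi (- (int m * (2 * int m + 1 - 2 * e))) / qpoch4 m"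

definition Delta_coeff :: "int \<Rightarrow> nat \<Rightarrow> Qq" where
  "Delta_coeff e m = (-1) ^ m * qv powi (- (int m * (2 * (1 - e) + 1))) / qpoch4 m"

lemma qpoch4_Suc: "qpoch4 (Suc j) = qpoch4 j * (1 - qv powi (- 4 * int (Suc j)))"
  by (simp add: qpoch4_def mult.commute)

lemma qpoch4_factor_nonzero: "1 - qv powi (- 4 * int (Suc j)) \<noteq> 0"
  using qv_powi_eq_iff[of 0 "- 4 * int (Suc j)"] by simp

lemma Pcan_coeff_0 [simp]: "Pcan_coeff e 0 = 1"
  by (simp add: Pcan_coeff_def qpoch4_def)

lemma Delta_coeff_0 [simp]: "Delta_coeff e 0 = 1"
  by (simp add: Delta_coeff_def qpoch4_def)

lemma Pcan_coeff_Suc: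
  "Pcan_coeff e (Suc j)
     = Pcan_coeff e j * qv powi (- (4 * int j + 3 - 2 * e)) / (1 - qv powi (- 4 * int (Suc j)))"
proof -
  have "qv powi (- (int (Suc j) * (2 * int (Suc j) + 1 - 2 * e)))
      = qv powi (- (int j * (2 * int j + 1 - 2 * e))) * qv powi (- (4 * int j + 3 - 2 * e))"
    by (simp flip: power_int_add) (simp add: algebra_simps)
  then show ?thesis
    by (simp add: Pcan_coeff_def qpoch4_Suc)
qed

lemma Pcan_coeff_swap: "Pcan_coeff (1 - e) j = Pcan_coeff e j * qv powi (int j * (2 - 4 * e))"
proof -
  have "qv powi (- (int j * (2 * int j + 1 - 2 * (1 - e))))
      = qv powi (- (int j * (2 * int j + 1 - 2 * e))) * qv powi (int j * (2 - 4 * e))"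
    by (simp flip: power_int_add) (simp add: algebra_simps)
  then show ?thesis
    by (simp add: Pcan_coeff_def)
qed

lemma Delta_coeff_Suc:
  "Delta_coeff e (Suc j)
     = - Delta_coeff e j * qv powi (- (3 - 2 * e)) / (1 - qv powi (- 4 * int (Suc j)))"
proof -
  have "qv powi (- (int (Suc j) * (2 * (1 - e) + 1)))
      = qv powi (- (int j * (2 * (1 - e) + 1))) * qv powi (- (3 - 2 * e))"
    by (simp flip: power_int_add) (simp add: algebra_simps)
  then show ?thesis
    by (simp add: Delta_coeff_def qpoch4_Suc)
qed

lemma Delta_coeff_swap: "Delta_coeff (1 - e) j = Delta_coeff e j * qv powi (int j * (2 - 4 * e))"
proof -
  have "qv powi (- (int j * (2 * (1 - (1 - e)) + 1)))
      = qv powi (- (int j * (2 * (1 - e) + 1))) * qv powi (int j * (2 - 4 * e))"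
    by (simp flip: power_int_add) (simp add: algebra_simps)
  then show ?thesis
    by (simp add: Delta_coeff_def)
qed

(* After clearing the denominators q - q^-1 and 1 - q^(-4(j+1)), splitting every power of q
   into powers of q, q^N and q^j leaves a polynomial identity. *)
lemmas qv_powi_split = power_int_add power_int_diff power_int_minus power_int_mult

lemma Pcan_coeff_identity:
  assumes "d = 0 \<or> d = 1"
  shows "Pcan_coeff d (Suc j) * qint_int (int N - 2 * int j - 1)
         + Pcan_coeff d j * Delta_lower (int N - 2 * int j)
       = qint_int (int N + 1) * Pcan_coeff (1 - d) (Suc j)
         + of_int d * qint_int (int N) * Pcan_coeff (1 - d) j"
proof -
  define s where "s = qv - inverse qv"
  define w where "w = 1 - qv powi (- 4 * int (Suc j))"
  have nonzero: "s \<noteq> 0" "w \<noteq> 0"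
    unfolding s_def w_def by (fact qv_minus_inverse_nonzero qpoch4_factor_nonzero)+
  consider (even) "d = 0" | (odd) "d = 1"
    using assms by blast
  then show ?thesis
  proof cases
    case even
    show ?thesis
      unfolding Pcan_coeff_swap Pcan_coeff_Suc qint_int_def Delta_lower_def
        s_def[symmetric] w_def[symmetric] even
      using nonzero by (simp add: field_simps) (simp add: s_def w_def qv_powi_split field_simps; algebra)
  next
    case odd
    show ?thesis
      unfolding Pcan_coeff_swap Pcan_coeff_Suc qint_int_def Delta_lower_def
        s_def[symmetric] w_def[symmetric] odd
      using nonzero by (simp add: field_simps) (simp add: s_def w_def qv_powi_split field_simps; algebra)
  qed
qed

lemma Delta_coeff_identity:
  assumes "d = 0 \<or> d = 1"
  shows "Delta_coeff d (Suc j) * qint_int (int N - 2 * int j - 1)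
         + Delta_coeff d j * (of_int d * qint_int (int N - 2 * int j))
       = qint_int (int N + 1) * Delta_coeff (1 - d) (Suc j) + Delta_lower (int N) * Delta_coeff (1 - d) j"
proof -
  define s where "s = qv - inverse qv"
  define w where "w = 1 - qv powi (- 4 * int (Suc j))"
  have nonzero: "s \<noteq> 0" "w \<noteq> 0"
    unfolding s_def w_def by (fact qv_minus_inverse_nonzero qpoch4_factor_nonzero)+
  consider (even) "d = 0" | (odd) "d = 1"
    using assms by blast
  then show ?thesis
  proof cases
    case even
    show ?thesis
      unfolding Delta_coeff_swap Delta_coeff_Suc qint_int_def Delta_lower_def
        s_def[symmetric] w_def[symmetric] even
      using nonzero by (simp add: field_simps) (simp add: s_def w_def qv_powi_split field_simps; algebra)
  next
    case odd
    show ?thesis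
      unfolding Delta_coeff_swap Delta_coeff_Suc qint_int_def Delta_lower_def
        s_def[symmetric] w_def[symmetric] odd
      using nonzero by (simp add: field_simps) (simp add: s_def w_def qv_powi_split field_simps; algebra)
  qed
qed

definition Pcan_expansion :: "nat \<Rightarrow> int \<Rightarrow> Qq poly" where
  "Pcan_expansion t N = shift2_sum (Pcan_coeff (delta_eq_int t N)) (zero_ext Delta) N"

definition Delta_expansion :: "nat \<Rightarrow> int \<Rightarrow> Qq poly" where
  "Delta_expansion t N = shift2_sum (Delta_coeff (delta_eq_int t N)) (zero_ext (Pcan t)) N"

lemma Pcan_expansion_rec:
  "BB * Pcan_expansion t (int n)
     = smult (qint_int (int n + 1)) (Pcan_expansion t (int n + 1))
       + smult (Pcan_lower t (int n)) (Pcan_expansion t (int n - 1))"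
proof -
  let ?d = "delta_eq_int t (int n)"
  have "BB * shift2_sum (Pcan_coeff ?d) (zero_ext Delta) (int n)
      = smult (qint_int (int n + 1)) (shift2_sum (Pcan_coeff (1 - ?d)) (zero_ext Delta) (int n + 1))
        + smult (Pcan_lower t (int n)) (shift2_sum (Pcan_coeff (1 - ?d)) (zero_ext Delta) (int n - 1))"
  proof (rule shift2_sum_rec[where u = "\<lambda>k. qint_int (k + 1)" and v = Delta_lower])
    show "Pcan_coeff ?d (Suc j) * qint_int (int n - 2 * int j - 2 + 1)
          + Pcan_coeff ?d j * Delta_lower (int n - 2 * int j)
        = qint_int (int n + 1) * Pcan_coeff (1 - ?d) (Suc j) + Pcan_lower t (int n) * Pcan_coeff (1 - ?d) j" for j
      using Pcan_coeff_identity[OF delta_eq_int_0_or_1, of t "int n" j n]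
      by (simp add: Pcan_lower_def mult.assoc)
  qed (simp_all add: zero_ext_Delta_rec)
  then show ?thesis
    by (simp add: Pcan_expansion_def delta_eq_int_flip)
qed

lemma Delta_expansion_rec:
  assumes "t \<in> {0, 1}"
  shows "BB * Delta_expansion t (int n)
     = smult (qint_int (int n + 1)) (Delta_expansion t (int n + 1))
       + smult (Delta_lower (int n)) (Delta_expansion t (int n - 1))"
proof -
  let ?d = "delta_eq_int t (int n)"
  have "BB * shift2_sum (Delta_coeff ?d) (zero_ext (Pcan t)) (int n)
      = smult (qint_int (int n + 1)) (shift2_sum (Delta_coeff (1 - ?d)) (zero_ext (Pcan t)) (int n + 1))
        + smult (Delta_lower (int n)) (shift2_sum (Delta_coeff (1 - ?d)) (zero_ext (Pcan t)) (int n - 1))"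
  proof (rule shift2_sum_rec[where u = "\<lambda>k. qint_int (k + 1)" and v = "Pcan_lower t"])
    show "Delta_coeff ?d (Suc j) * qint_int (int n - 2 * int j - 2 + 1)
          + Delta_coeff ?d j * Pcan_lower t (int n - 2 * int j)
        = qint_int (int n + 1) * Delta_coeff (1 - ?d) (Suc j) + Delta_lower (int n) * Delta_coeff (1 - ?d) j" for j
      using Delta_coeff_identity[OF delta_eq_int_0_or_1, of t "int n" j n]
      by (simp add: Pcan_lower_def delta_eq_int_shift2)
  qed (simp_all add: zero_ext_Pcan_rec[OF assms])
  then show ?thesis
    by (simp add: Delta_expansion_def delta_eq_int_flip)
qed

lemma Pcan_0 [simp]: "Pcan t 0 = 1"
  by (simp add: Pcan_def)

lemma Pcan_eq_expansion:
  assumes "t \<in> {0, 1}"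
  shows "Pcan t n = Pcan_expansion t (int n)"
proof -
  have "zero_ext (Pcan t) (int n) = Pcan_expansion t (int n)"
    by (rule three_term_rec_unique[OF _ _ zero_ext_Pcan_rec[OF assms] Pcan_expansion_rec])
      (simp_all add: qint_int_nonzero Pcan_expansion_def shift2_sum_def zero_ext_def)
  then show ?thesis
    by simp
qed

lemma Delta_eq_expansion:
  assumes "t \<in> {0, 1}"
  shows "Delta n = Delta_expansion t (int n)"
proof -
  have "zero_ext Delta (int n) = Delta_expansion t (int n)"
    by (rule three_term_rec_unique[OF _ _ zero_ext_Delta_rec Delta_expansion_rec[OF assms]])
      (simp_all add: qint_int_nonzero Delta_expansion_def shift2_sum_def zero_ext_def)
  then show ?thesis
    by simp
qed

theorem theorem2p7:
  fixes t n :: nat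
  assumes "t \<in> {0, 1}"
  shows "Pcan t n = (\<Sum>m\<in>{0..n div 2}.
            smult (qv powi (- (int m * (2 * int m + 1 - 2 * delta_eq t n))) / qpoch4 m)
                  (Delta (n - 2 * m)))
       \<and> Delta n = (\<Sum>m\<in>{0..n div 2}.
            smult ((-1) ^ m * qv powi (- (int m * (2 * (1 - delta_eq t n) + 1))) / qpoch4 m)
                  (Pcan t (n - 2 * m)))"
  using Pcan_eq_expansion[OF assms, of n] Delta_eq_expansion[OF assms, of n]
  by (simp add: Pcan_expansion_def Delta_expansion_def shift2_sum_zero_ext Pcan_coeff_def Delta_coeff_def)

end
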